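(* Let $\mathcal Q\in\mathbb M_{\mathrm{TS}}$ and $v\in\mathsf T(\mathcal Q)$, and let $Q_v$ be the unique element of $\mathcal Q$ with $v\in\mathsf T(Q_v)$. Then there exist unique parameters $j\in\{1,2\}$ and $q\in(0,1)$ such that $v\in\mathsf V(Q')$ for every $Q'\in\mathrm{bisect}_{j,q}(Q_v)$. For these parameters, the mesh $\tilde{\mathcal Q}=(\mathcal Q\setminus\{Q_v\})\cup\mathrm{bisect}_{j,q}(Q_v)$ belongs to $\mathbb M_{\mathrm{TS}}$ and satisfies $v\notin\mathsf T(\tilde{\mathcal Q})$.
   Context: Let $M,N\in\mathbb N$ and $\mathcal Q_0=\{[m-1,m]\times[n-1,n]: m\in\{1,\dots,M\},\ n\in\{1,\dots,N\}\}$. For a rectangle $Q=[x,x+\tilde x]\times[y,y+\tilde y]$, $j\in\{1,2\}$ and $0<q<1$, define $\mathrm{bisect}_{j,q}(Q)=\{[x,x+q\tilde x]\times[y,y+\tilde y],\ [x+q\tilde x,x+\tilde x]\times[y,y+\tilde y]\}$ if $j=1$ and $\mathrm{bisect}_{j,q}(Q)=\{[x,x+\tilde x]\times[y,y+q\tilde y],\ [x,x+\tilde x]\times[y+q\tilde y,y+\tilde y]\}$ if $j=2$. The mesh class $\mathbb M_{\mathrm{TS}}$ is the smallest set of finite sets of closed rectangles such that $\mathcal Q_0\in\mathbb M_{\mathrm{TS}}$ and, whenever $\mathcal Q\in\mathbb M_{\mathrm{TS}}$, $Q\in\mathcal Q$, $j\in\{1,2\}$, $0<q<1$, also $(\mathcal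 Q\setminus\{Q\})\cup\mathrm{bisect}_{j,q}(Q)\in\mathbb M_{\mathrm{TS}}$. For $Q=[x,x+\tilde x]\times[y,y+\tilde y]$ define the vertex set $\mathsf V(Q)=\{x,x+\tilde x\}\times\{y,y+\tilde y\}$. For a mesh $\mathcal Q$, $\mathsf V(\mathcal Q)=\bigcup_{Q\in\mathcal Q}\mathsf V(Q)$; for $Q\in\mathcal Q$, $\mathsf T(Q)=(\mathsf V(\mathcal Q)\cap Q)\setminus\mathsf V(Q)$ and $\mathsf T(\mathcal Q)=\bigcup_{Q\in\mathcal Q}\mathsf T(Q)$ (T-junctions). (For each $v\in\mathsf T(\mathcal Q)$ there is exactly one $Q_v\in\mathcal Q$ with $v\in\mathsf T(Q_v)$.) *)

theory Defs
  imports Main "HOL.Real"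
begin

text \<open>A closed axis-parallel rectangle [x,x+xt] x [y,y+yt] is represented by its
  parameter tuple (x, xt, y, yt).\<close>
type_synonym rect = "real \<times> real \<times> real \<times> real"

fun rset :: "rect \<Rightarrow> (real \<times> real) set" where
  "rset (x, xt, y, yt) = {x..x+xt} \<times> {y..y+yt}"

fun verts :: "rect \<Rightarrow> (real \<times> real) set" where
  "verts (x, xt, y, yt) = {x, x+xt} \<times> {y, y+yt}"

fun bisect :: "nat \<Rightarrow> real \<Rightarrow> rect \<Rightarrow> rect set" where
  "bisect j q (x, xt, y, yt) =
     (if j = 1 then {(x, q*xt, y, yt), (x + q*xt, xt - q*xt, y, yt)}
      else {(x, xt, y, q*yt), (x, xt, y + q*yt, yt - q*yt)})"

definition Q0 :: "nat \<Rightarrow> nat \<Rightarrow> rect set" where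
  "Q0 M N = {(real m - 1, 1, real n - 1, 1) | m n. m \<in> {1..M} \<and> n \<in> {1..N}}"

inductive_set MTS :: "nat \<Rightarrow> nat \<Rightarrow> rect set set" for M N where
  init: "Q0 M N \<in> MTS M N"
| refine: "\<lbrakk>\<Q> \<in> MTS M N; Q \<in> \<Q>; j \<in> {1,2}; 0 < q; q < 1\<rbrakk>
           \<Longrightarrow> (\<Q> - {Q}) \<union> bisect j q Q \<in> MTS M N"

definition VM :: "rect set \<Rightarrow> (real \<times> real) set" where
  "VM \<Q> = (\<Union>Q\<in>\<Q>. verts Q)"

definition TQ :: "rect set \<Rightarrow> rect \<Rightarrow> (real \<times> real) set" where
  "TQ \<Q> Q = (VM \<Q> \<inter> rset Q) - verts Q"

definition TM :: "rect set \<Rightarrow> (real \<times> real) set" where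
  "TM \<Q> = (\<Union>Q\<in>\<Q>. TQ \<Q> Q)"

end

theory Submission
  imports Defs
begin

text \<open>Every mesh in the class consists of nondegenerate rectangles with pairwise disjoint
  interiors. A vertex of one cell that lies on another cell Q without being a vertex of Q
  must sit in the relative interior of an edge of Q; this pins down the direction and the
  ratio of the unique bisection of Q through it. Moreover no third cell can also carry the
  point as a hanging node, since the half-neighbourhoods of the two cells on either side of
  the edge would leave no room for the quadrant of the cell having it as a corner.\<close>

fun nondegenerate :: "rect \<Rightarrow> bool" where
  "nondegenerate (x, xt, y, yt) = (0 < xt \<and> 0 < yt)"

fun interiors_disjoint :: "rect \<Rightarrow> rect \<Rightarrow> bool" where
  "interiors_disjoint (x, xt, y, yt) (x', xt', y', yt') =
     (x + xt \<le> x' \<or> x' + xt' \<le> x \<or> y + yt \<le> y' \<or> y' + yt' \<le> y)"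

definition nonoverlapping :: "rect set \<Rightarrow> bool" where
  "nonoverlapping \<Q> \<longleftrightarrow> (\<forall>R\<in>\<Q>. nondegenerate R)
     \<and> (\<forall>R\<in>\<Q>. \<forall>S\<in>\<Q>. R \<noteq> S \<longrightarrow> interiors_disjoint R S)"

lemma interiors_disjoint_commute: "interiors_disjoint R S = interiors_disjoint S R"
  by (cases R; cases S) auto

lemma nondegenerate_bisect:
  assumes "P \<in> bisect j q Q" "nondegenerate Q" "0 < q" "q < 1"
  shows "nondegenerate P"
  using assms by (cases Q) (auto split: if_splits)

lemma interiors_disjoint_bisect:
  assumes "P \<in> bisect j q Q" "nondegenerate Q" "0 < q" "q < 1" "interiors_disjoint Q S"
  shows "interiors_disjoint P S"
proof -
  obtain x xt y yt where Q: "Q = (x, xt, y, yt)" by (cases Q)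
  have "0 < q * xt" "q * xt < xt" "0 < q * yt" "q * yt < yt"
    using assms Q by auto
  then show ?thesis
    using assms Q by (cases S) (auto split: if_splits)
qed

lemma interiors_disjoint_bisect_pieces:
  assumes "P \<in> bisect j q Q" "P' \<in> bisect j q Q" "P \<noteq> P'"
  shows "interiors_disjoint P P'"
  using assms by (cases Q) (auto split: if_splits)

lemma nonoverlapping_Q0: "nonoverlapping (Q0 M N)"
proof -
  have "interiors_disjoint (real m - 1, 1, real n - 1, 1) (real m' - 1, 1, real n' - 1, 1)"
    if "(m, n) \<noteq> (m', n')" for m n m' n' :: nat
  proof -
    have "m + 1 \<le> m' \<or> m' + 1 \<le> m \<or> n + 1 \<le> n' \<or> n' + 1 \<le> n"
      using that by auto
    then show ?thesis
      by auto
  qed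
  then show ?thesis
    unfolding nonoverlapping_def Q0_def by fastforce
qed

lemma nonoverlapping_refine:
  assumes "nonoverlapping \<Q>" "Q \<in> \<Q>" "0 < q" "q < 1"
  shows "nonoverlapping ((\<Q> - {Q}) \<union> bisect j q Q)"
proof -
  have Q: "nondegenerate Q" "\<And>S. S \<in> \<Q> - {Q} \<Longrightarrow> interiors_disjoint Q S"
    using assms(1,2) unfolding nonoverlapping_def by auto
  have pieces: "nondegenerate P" "\<And>S. S \<in> \<Q> - {Q} \<Longrightarrow> interiors_disjoint P S"
    if "P \<in> bisect j q Q" for P
    using that nondegenerate_bisect interiors_disjoint_bisect Q assms(3,4) by blast+
  show ?thesis
    using assms(1) pieces interiors_disjoint_bisect_pieces interiors_disjoint_commute
    unfolding nonoverlapping_def by (metis Diff_iff UnE)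
qed

lemma MTS_nonoverlapping: "\<Q> \<in> MTS M N \<Longrightarrow> nonoverlapping \<Q>"
  by (induction rule: MTS.induct) (auto intro: nonoverlapping_Q0 nonoverlapping_refine)

lemma hanging_vertex_on_open_edge:
  assumes "nondegenerate (x, xt, y, yt)" "nondegenerate S"
    and "interiors_disjoint (x, xt, y, yt) S"
    and "(a, b) \<in> rset (x, xt, y, yt) - verts (x, xt, y, yt)" "(a, b) \<in> verts S"
  shows "(x < a \<and> a < x + xt \<and> b \<in> {y, y + yt}) \<or> (y < b \<and> b < y + yt \<and> a \<in> {x, x + xt})"
  using assms by (cases S) (simp, smt)

lemma hanging_vertex_unique:
  assumes "nondegenerate Q" "nondegenerate R" "nondegenerate S"
    and "interiors_disjoint Q R" "interiors_disjoint Q S" "interiors_disjoint R S"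
    and "v \<in> rset Q - verts Q" "v \<in> rset R - verts R" "v \<in> verts S"
  shows False
  using assms by (cases v; cases Q; cases R; cases S) (simp, smt)

lemma bisect_through_point_iff:
  assumes "nondegenerate (x, xt, y, yt)"
  shows "(j \<in> {1, 2} \<and> 0 < q \<and> q < 1 \<and> (\<forall>Q'\<in>bisect j q (x, xt, y, yt). (a, b) \<in> verts Q'))
    \<longleftrightarrow> 0 < q \<and> q < 1 \<and> ((j = 1 \<and> a = x + q * xt \<and> b \<in> {y, y + yt})
                          \<or> (j = 2 \<and> b = y + q * yt \<and> a \<in> {x, x + xt}))"
  using assms by auto

lemma open_segment_ratio_iff:
  fixes x a xt q :: real
  assumes "x < a" "a < x + xt"
  shows "0 < q \<and> q < 1 \<and> a = x + q * xt \<longleftrightarrow> q = (a - x) / xt"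
proof -
  have "0 < xt" using assms by linarith
  then show ?thesis
    using assms by (auto simp: field_simps zero_less_mult_iff)
qed

lemma TQ_corner_of_other_cell:
  assumes "v \<in> TQ \<Q> Q"
  obtains S where "S \<in> \<Q>" "S \<noteq> Q" "v \<in> verts S" "v \<in> rset Q - verts Q"
  using assms unfolding TQ_def VM_def by auto

lemma ex1_bisect_through_hanging_vertex:
  assumes "nonoverlapping \<Q>" "Qv \<in> \<Q>" "v \<in> TQ \<Q> Qv"
  shows "\<exists>!(j, q). j \<in> {1, 2} \<and> 0 < q \<and> q < 1 \<and> (\<forall>Q'\<in>bisect j q Qv. v \<in> verts Q')"
proof -
  obtain S where S: "S \<in> \<Q>" "S \<noteq> Qv" "v \<in> verts S" and v: "v \<in> rset Qv - verts Qv"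
    using assms(3) by (rule TQ_corner_of_other_cell)
  obtain x xt y yt where Qv: "Qv = (x, xt, y, yt)" by (cases Qv)
  obtain a b where ab: "v = (a, b)" by (cases v)
  have nd: "nondegenerate Qv" "nondegenerate S" and "interiors_disjoint Qv S"
    using assms(1,2) S unfolding nonoverlapping_def by auto
  then have edge: "(x < a \<and> a < x + xt \<and> b \<in> {y, y + yt}) \<or> (y < b \<and> b < y + yt \<and> a \<in> {x, x + xt})"
    using hanging_vertex_on_open_edge S(3) v unfolding Qv ab by blast
  let ?P = "\<lambda>j q. j \<in> {1, 2} \<and> 0 < q \<and> q < 1 \<and> (\<forall>Q'\<in>bisect j q Qv. v \<in> verts Q')"
  note split_iff = bisect_through_point_iff[OF nd(1)[unfolded Qv], of _ _ a b, folded Qv ab]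
  from edge consider
      "x < a" "a < x + xt" "a \<notin> {x, x + xt}" "b \<in> {y, y + yt}"
    | "y < b" "b < y + yt" "b \<notin> {y, y + yt}" "a \<in> {x, x + xt}"
    by fastforce
  then show ?thesis
  proof cases
    case 1
    then have "?P j q \<longleftrightarrow> (j, q) = (1, (a - x) / xt)" for j q
      using open_segment_ratio_iff[of x a xt q] unfolding split_iff by (simp only:) blast
    then show ?thesis by (intro ex1I[of _ "(1, (a - x) / xt)"]) auto
  next
    case 2
    then have "?P j q \<longleftrightarrow> (j, q) = (2, (b - y) / yt)" for j q
      using open_segment_ratio_iff[of y b yt q] unfolding split_iff by (simp only:) blast
    then show ?thesis by (intro ex1I[of _ "(2, (b - y) / yt)"]) auto
  qed
qed

lemma bisect_resolves_hanging_vertex: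
  assumes "nonoverlapping \<Q>" "Qv \<in> \<Q>" "v \<in> TQ \<Q> Qv"
    and "\<forall>Q'\<in>bisect j q Qv. v \<in> verts Q'"
  shows "v \<notin> TM ((\<Q> - {Qv}) \<union> bisect j q Qv)"
proof -
  obtain S where S: "S \<in> \<Q>" "S \<noteq> Qv" "v \<in> verts S" and v: "v \<in> rset Qv - verts Qv"
    using assms(3) by (rule TQ_corner_of_other_cell)
  have "v \<notin> rset R - verts R" if "R \<in> \<Q>" "R \<noteq> Qv" for R
  proof
    assume "v \<in> rset R - verts R"
    moreover have "R \<noteq> S" using \<open>v \<in> rset R - verts R\<close> S(3) by auto
    ultimately show False
      using hanging_vertex_unique[of Qv R S v] assms(1,2) that S v
      unfolding nonoverlapping_def by auto
  qed
  then show ?thesis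
    using assms(4) unfolding TM_def TQ_def by auto
qed

theorem mainTheorem2:
  fixes M N :: nat and \<Q> :: "rect set" and v :: "real \<times> real" and Qv :: rect
  assumes "\<Q> \<in> MTS M N"
    and "v \<in> TM \<Q>"
    and "Qv \<in> \<Q>" and "v \<in> TQ \<Q> Qv"
  shows "(\<exists>!(j, q). j \<in> {1,2} \<and> 0 < q \<and> q < 1 \<and> (\<forall>Q'\<in>bisect j q Qv. v \<in> verts Q'))
       \<and> (\<forall>j q. j \<in> {1,2} \<and> 0 < q \<and> q < 1 \<and> (\<forall>Q'\<in>bisect j q Qv. v \<in> verts Q')
            \<longrightarrow> ((\<Q> - {Qv}) \<union> bisect j q Qv \<in> MTS M N
                 \<and> v \<notin> TM ((\<Q> - {Qv}) \<union> bisect j q Qv)))"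
proof -
  have mesh: "nonoverlapping \<Q>"
    using assms(1) by (rule MTS_nonoverlapping)
  show ?thesis
  proof (intro conjI allI impI)
    show "\<exists>!(j, q). j \<in> {1,2} \<and> 0 < q \<and> q < 1 \<and> (\<forall>Q'\<in>bisect j q Qv. v \<in> verts Q')"
      using mesh assms(3,4) by (rule ex1_bisect_through_hanging_vertex)
  next
    fix j q
    assume split: "j \<in> {1,2} \<and> 0 < q \<and> q < 1 \<and> (\<forall>Q'\<in>bisect j q Qv. v \<in> verts Q')"
    then show "(\<Q> - {Qv}) \<union> bisect j q Qv \<in> MTS M N"
      using MTS.refine[OF assms(1,3)] by blast
    show "v \<notin> TM ((\<Q> - {Qv}) \<union> bisect j q Qv)"
      using bisect_resolves_hanging_vertex[OF mesh assms(3,4)] split by blast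
  qed
qed

end
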